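(* Under the assumptions of the preceding setting (channel $y=hx+v$, $v\sim\mathcal{CN}(0,1)$, perfect CSI at transmitter and receiver, $|h|^2$ with continuous density $f$, finite mean, and strictly increasing CDF $F$ on its support; fixed $A>1$), consider the On-Off power allocation $$P(h)=\begin{cases}A\,\mathrm{SNR}, & |h|^2\ge F^{-1}(1-\frac1A),\\ 0,&\text{otherwise},\end{cases}$$ which satisfies $\mathbf{E}[P(h)]\le\mathrm{SNR}$ and $P(h)\le A\,\mathrm{SNR}$. Its rate $$R(\mathrm{SNR})=\int_{F^{-1}(1-\frac1A)}^\infty \log(1+A\,\mathrm{SNR}\,t)\,f(t)\,dt$$ satisfies $\lim_{\mathrm{SNR}\to0}R(\mathrm{SNR})/C(\mathrm{SNR})=1$, where $C(\mathrm{SNR})$ is the capacity under average power constraint $\mathrm{SNR}$ and peak power constraint $A\,\mathrm{SNR}$.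
   Context: $C(\mathrm{SNR})=\sup\mathbf{E}[\log(1+P(h)|h|^2)]$ over measurable $P(h)\ge 0$ with $\mathbf{E}[P(h)]\le\mathrm{SNR}$ and $\max_hP(h)\le A\,\mathrm{SNR}$. Logarithms are natural. *)

theory Defs
  imports "HOL-Analysis.Analysis"
begin

text \<open>Channel gain g = |h|^2 has density f w.r.t. Lebesgue measure on the reals.\<close>

definition gain_cdf :: "(real \<Rightarrow> real) \<Rightarrow> real \<Rightarrow> real" where
  "gain_cdf f x = (LINT t:{..x}|lborel. f t)"

text \<open>Inverse CDF F^{-1}(p): the (unique, under strict monotonicity) point with F t = p.\<close>
definition gain_cdf_inv :: "(real \<Rightarrow> real) \<Rightarrow> real \<Rightarrow> real" where
  "gain_cdf_inv f p = (THE t. gain_cdf f t = p)"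

text \<open>Ergodic rate E[log(1 + P(g) g)] of a power allocation P (as a function of g = |h|^2).\<close>
definition rate :: "(real \<Rightarrow> real) \<Rightarrow> (real \<Rightarrow> real) \<Rightarrow> real" where
  "rate f P = (LINT t|lborel. f t * ln (1 + P t * t))"

definition admissible :: "(real \<Rightarrow> real) \<Rightarrow> real \<Rightarrow> real \<Rightarrow> (real \<Rightarrow> real) \<Rightarrow> bool" where
  "admissible f A snr P \<longleftrightarrow> P \<in> borel_measurable lborel \<and> (\<forall>t. 0 \<le> P t \<and> P t \<le> A * snr)
     \<and> (LINT t|lborel. f t * P t) \<le> snr"

definition capacity :: "(real \<Rightarrow> real) \<Rightarrow> real \<Rightarrow> real \<Rightarrow> real" where
  "capacity f A snr = Sup (rate f ` {P. admissible f A snr P})"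

definition onoff_rate :: "(real \<Rightarrow> real) \<Rightarrow> real \<Rightarrow> real \<Rightarrow> real" where
  "onoff_rate f A snr = (LINT t:{gain_cdf_inv f (1 - 1/A)..}|lborel. ln (1 + A * snr * t) * f t)"

end

theory Submission
  imports Defs "HOL-Probability.Probability" "HOL-Real_Asymp.Real_Asymp"
begin

text \<open>Let \<open>\<tau> = F\<^sup>-\<^sup>1(1 - 1/A)\<close>, so that the gain exceeds \<open>\<tau>\<close> with probability exactly \<open>1/A\<close>, and
  put \<open>M = E[g; g \<ge> \<tau>]\<close>. Since \<open>ln (1 + x) \<le> x\<close>, the rate of any admissible allocation is at most
  the mean received power \<open>E[P(g) g]\<close>, and by the bathtub principle this is maximised, under the
  average constraint \<open>SNR\<close> and the peak constraint \<open>A SNR\<close>, by spending the peak power exactly on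
  \<open>{g \<ge> \<tau>}\<close>; hence \<open>R(SNR) \<le> C(SNR) \<le> A SNR M\<close>. On the other hand \<open>ln (1 + x) / x \<rightarrow> 1\<close> and
  dominated convergence give \<open>R(SNR) / (A SNR) \<rightarrow> M > 0\<close>, which squeezes \<open>R / C\<close> to \<open>1\<close>.\<close>

lemma integrable_mult_bounded:
  fixes g h :: "'a \<Rightarrow> real"
  assumes g: "integrable M g" and h: "h \<in> borel_measurable M" and bound: "\<And>x. \<bar>h x\<bar> \<le> c"
  shows "integrable M (\<lambda>x. g x * h x)"
proof (rule Bochner_Integration.integrable_bound)
  show "integrable M (\<lambda>x. c * g x)" using g by simp
  show "(\<lambda>x. g x * h x) \<in> borel_measurable M"
    using g h by (simp add: borel_measurable_integrable)
  show "AE x in M. norm (g x * h x) \<le> norm (c * g x)"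
  proof (rule AE_I2)
    fix x
    have "\<bar>g x\<bar> * \<bar>h x\<bar> \<le> \<bar>g x\<bar> * c" using bound[of x] by (intro mult_left_mono) auto
    also have "\<dots> = \<bar>c * g x\<bar>" using abs_ge_zero[of "h x"] bound[of x] by (simp add: abs_mult)
    finally show "norm (g x * h x) \<le> norm (c * g x)" by (simp add: abs_mult)
  qed
qed

lemma set_integral_singleton_lborel: "(LINT t:{x}|lborel. f t) = (0::real)"
  unfolding set_lebesgue_integral_def
  by (rule integral_eq_zero_AE) (use AE_lborel_singleton[of x] in eventually_elim, simp)

lemma set_integral_atLeast_ge_mult:
  fixes f :: "real \<Rightarrow> real"
  assumes nonneg: "\<And>t. 0 \<le> f t" and int: "integrable lborel f" and mean: "integrable lborel (\<lambda>t. t * f t)"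
  shows "\<tau> * (LINT t:{\<tau>..}|lborel. f t) \<le> (LINT t:{\<tau>..}|lborel. t * f t)"
proof -
  have "set_integrable lborel {\<tau>..} (\<lambda>t. \<tau> * f t)" "set_integrable lborel {\<tau>..} (\<lambda>t. t * f t)"
    using integrable_mult_indicator[OF _ integrable_mult_right[OF int]] integrable_mult_indicator[OF _ mean]
    by (auto simp: set_integrable_def)
  then show ?thesis
    using set_integral_mono[of lborel "{\<tau>..}" "\<lambda>t. \<tau> * f t"] nonneg by (simp add: mult_right_mono)
qed

lemma tendsto_ln_add_one_mult_div:
  fixes t :: real
  shows "((\<lambda>a. ln (1 + a * t) / a) \<longlongrightarrow> t) (at_right 0)"
proof -
  consider "t < 0" | "t = 0" | "t > 0" by linarith
  then show ?thesis by cases (real_asymp, simp, real_asymp)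
qed

lemma tendsto_ratio_sandwich:
  fixes r c u :: "'a \<Rightarrow> real"
  assumes bounds: "\<forall>\<^sub>F x in F. 0 < r x \<and> r x \<le> c x \<and> c x \<le> u x"
    and lim: "((\<lambda>x. r x / u x) \<longlongrightarrow> 1) F"
  shows "((\<lambda>x. r x / c x) \<longlongrightarrow> 1) F"
proof (rule tendsto_sandwich[OF _ _ lim tendsto_const])
  show "\<forall>\<^sub>F x in F. r x / u x \<le> r x / c x"
    using bounds by eventually_elim (auto intro: divide_left_mono)
  show "\<forall>\<^sub>F x in F. r x / c x \<le> 1"
    using bounds by eventually_elim simp
qed

lemma measure_density_lborel:
  fixes f :: "real \<Rightarrow> real"
  assumes nonneg: "\<And>t. 0 \<le> f t" and int: "integrable lborel f" and S: "S \<in> sets borel"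
  shows "measure (density lborel f) S = (LINT t:S|lborel. f t)"
proof -
  have f_meas: "f \<in> borel_measurable borel" using int by (simp add: borel_measurable_integrable)
  have "emeasure (density lborel f) S = (\<integral>\<^sup>+ t. ennreal (indicator S t * f t) \<partial>lborel)"
    using S f_meas by (simp add: emeasure_density nn_integral_set_ennreal mult.commute)
  also have "\<dots> = ennreal (LINT t|lborel. indicator S t * f t)"
    using integrable_mult_indicator[OF _ int, of S] S nonneg
    by (intro nn_integral_eq_integral) auto
  finally show ?thesis
    using nonneg S by (simp add: measure_def set_lebesgue_integral_def integral_nonneg)
qed

lemma real_distribution_density_lborel:
  fixes f :: "real \<Rightarrow> real"
  assumes nonneg: "\<And>t. 0 \<le> f t" and int: "integrable lborel f" and one: "(LINT t|lborel. f t) = 1"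
  shows "real_distribution (density lborel f)"
proof -
  have "emeasure (density lborel f) UNIV = 1"
    using nonneg int one by (simp add: emeasure_density nn_integral_eq_integral)
  then have "prob_space (density lborel f)"
    by (intro prob_spaceI) simp
  then show ?thesis
    by (simp add: real_distribution_def real_distribution_axioms_def)
qed

lemma gain_cdf_eq_cdf:
  fixes f :: "real \<Rightarrow> real"
  assumes "\<And>t. 0 \<le> f t" and "integrable lborel f"
  shows "gain_cdf f = cdf (density lborel f)"
  using measure_density_lborel[OF assms] by (simp add: fun_eq_iff gain_cdf_def cdf_def)

lemma gain_cdf_gain_cdf_inv:
  fixes f :: "real \<Rightarrow> real"
  assumes nonneg: "\<And>t. 0 \<le> f t" and int: "integrable lborel f" and one: "(LINT t|lborel. f t) = 1"
    and strict: "strict_mono_on {t. 0 < gain_cdf f t \<and> gain_cdf f t < 1} (gain_cdf f)"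
    and p: "0 < p" "p < 1"
  shows "gain_cdf f (gain_cdf_inv f p) = p"
proof -
  interpret D: real_distribution "density lborel f"
    by (rule real_distribution_density_lborel[OF nonneg int one])
  note F_eq = gain_cdf_eq_cdf[OF nonneg int]
  have cont: "continuous_on S (gain_cdf f)" for S
    unfolding F_eq using D.isCont_cdf measure_density_lborel[OF nonneg int]
    by (intro continuous_at_imp_continuous_on) (simp add: set_integral_singleton_lborel)
  obtain a where a: "gain_cdf f a < p"
    using order_tendstoD(2)[OF D.cdf_lim_at_bot p(1)]
    by (auto simp: eventually_at_bot_linorder F_eq)
  obtain b where b: "gain_cdf f b > p" "a \<le> b"
    using order_tendstoD(1)[OF D.cdf_lim_at_top_prob p(2)]
    by (auto simp: eventually_at_top_linorder F_eq) (metis max.cobounded1 max.cobounded2)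
  obtain x where x: "gain_cdf f x = p"
    using IVT'[of "gain_cdf f" a p b] a b cont by (auto simp: less_imp_le)
  have "y = x" if "gain_cdf f y = p" for y
    using strict_mono_on_eqD[OF strict] x that p by fastforce
  then have "gain_cdf_inv f p = x"
    unfolding gain_cdf_inv_def using x by (intro the_equality)
  with x show ?thesis by simp
qed

lemma set_integral_atLeast_gain_cdf:
  fixes f :: "real \<Rightarrow> real"
  assumes nonneg: "\<And>t. 0 \<le> f t" and int: "integrable lborel f" and one: "(LINT t|lborel. f t) = 1"
  shows "(LINT t:{x..}|lborel. f t) = 1 - gain_cdf f x"
proof -
  interpret D: real_distribution "density lborel f"
    by (rule real_distribution_density_lborel[OF nonneg int one])
  note M_eq = measure_density_lborel[OF nonneg int]
  have "{x..} = UNIV - ({..x} - {x})" by auto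
  then have "measure (density lborel f) {x..} = 1 - measure (density lborel f) ({..x} - {x})"
    using D.prob_compl[of "{..x} - {x}"] by simp
  also have "measure (density lborel f) ({..x} - {x}) = gain_cdf f x"
    using D.finite_measure_Diff[of "{..x}" "{x}"]
    by (simp add: M_eq gain_cdf_def set_integral_singleton_lborel)
  finally show ?thesis by (simp add: M_eq)
qed

lemma gain_cdf_pos_imp_pos:
  fixes f :: "real \<Rightarrow> real"
  assumes neg: "\<And>t. t < 0 \<Longrightarrow> f t = 0" and pos: "0 < gain_cdf f x"
  shows "0 < x"
proof (rule ccontr)
  assume "\<not> 0 < x"
  have "AE t in lborel. t \<noteq> 0" by (rule AE_lborel_singleton)
  then have "AE t in lborel. indicator {..x} t * f t = 0"
    by eventually_elim (use \<open>\<not> 0 < x\<close> in \<open>auto simp: neg indicator_def\<close>)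
  then have "(LINT t:{..x}|lborel. f t) = 0"
    unfolding set_lebesgue_integral_def by (simp add: integral_eq_zero_AE)
  with pos show False by (simp add: gain_cdf_def)
qed

lemma rate_le_received_power:
  fixes f P :: "real \<Rightarrow> real"
  assumes nonneg: "\<And>t. 0 \<le> f t" and neg: "\<And>t. t < 0 \<Longrightarrow> f t = 0"
    and f_meas: "f \<in> borel_measurable borel" and mean: "integrable lborel (\<lambda>t. t * f t)"
    and P_meas: "P \<in> borel_measurable lborel" and P_nonneg: "\<And>t. 0 \<le> P t" and P_le: "\<And>t. P t \<le> c"
  shows "rate f P \<le> (LINT t|lborel. f t * P t * t)"
proof -
  have ln_bound: "0 \<le> f t * ln (1 + P t * t) \<and> f t * ln (1 + P t * t) \<le> f t * P t * t" for t
  proof (cases "t < 0")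
    case False
    then have "0 \<le> P t * t" using P_nonneg by simp
    then show ?thesis
      using ln_add_one_self_le_self nonneg[of t] by (simp add: mult_left_mono mult.assoc)
  qed (simp add: neg)
  have "integrable lborel (\<lambda>t. t * f t * P t)"
    using P_nonneg P_le by (intro integrable_mult_bounded[OF mean P_meas, of c]) (simp add: abs_le_iff)
  then have int_power: "integrable lborel (\<lambda>t. f t * P t * t)"
    by (simp add: mult_ac)
  have "norm (f t * ln (1 + P t * t)) \<le> norm (f t * P t * t)" for t
    using ln_bound[of t] by simp
  then have "integrable lborel (\<lambda>t. f t * ln (1 + P t * t))"
    using f_meas P_meas by (intro Bochner_Integration.integrable_bound[OF int_power]) auto
  with int_power show ?thesis
    unfolding rate_def using ln_bound by (intro integral_mono) auto
qed

text \<open>The bathtub principle: under a peak constraint the power budget is best spent on the largest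
  gains.\<close>
lemma bathtub_bound:
  fixes w P :: "real \<Rightarrow> real"
  assumes nonneg: "\<And>t. 0 \<le> w t" and int: "integrable lborel w"
    and mean: "integrable lborel (\<lambda>t. t * w t)"
    and P_meas: "P \<in> borel_measurable lborel" and P_nonneg: "\<And>t. 0 \<le> P t" and P_le: "\<And>t. P t \<le> c"
    and budget: "(LINT t|lborel. w t * P t) \<le> c * (LINT t:{\<tau>..}|lborel. w t)"
    and \<tau>: "0 \<le> \<tau>"
  shows "(LINT t|lborel. w t * P t * t) \<le> c * (LINT t:{\<tau>..}|lborel. t * w t)"
proof -
  have bdd: "\<bar>P t\<bar> \<le> c" for t using P_nonneg[of t] P_le[of t] by simp
  have int_tail_mean: "integrable lborel (\<lambda>t. indicator {\<tau>..} t * (t * w t))"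
    and int_tail: "integrable lborel (\<lambda>t. indicator {\<tau>..} t * w t)"
    using integrable_mult_indicator[OF _ mean] integrable_mult_indicator[OF _ int] by auto
  have int_wP: "integrable lborel (\<lambda>t. w t * P t)"
    by (rule integrable_mult_bounded[OF int P_meas bdd])
  have int_wPt: "integrable lborel (\<lambda>t. w t * P t * t)"
    using integrable_mult_bounded[OF mean P_meas bdd] by (simp add: mult_ac)
  \<comment> \<open>\<open>\<tau>\<close> acts as a Lagrange multiplier for the budget constraint\<close>
  have exchange: "w t * P t * t
      \<le> c * (indicator {\<tau>..} t * (t * w t)) + \<tau> * (w t * P t - c * (indicator {\<tau>..} t * w t))" for t
  proof -
    have "w t * (P t - c * indicator {\<tau>..} t) * (t - \<tau>) \<le> 0"
    proof (cases "\<tau> \<le> t")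
      case True
      have "w t * (P t - c) \<le> 0" using nonneg[of t] P_le[of t] by (simp add: mult_nonneg_nonpos)
      with True show ?thesis by (simp add: mult_nonpos_nonneg)
    next
      case False
      have "0 \<le> w t * P t" using nonneg[of t] P_nonneg[of t] by simp
      with False show ?thesis by (simp add: mult_nonneg_nonpos)
    qed
    then show ?thesis by (simp add: algebra_simps)
  qed
  have "(LINT t|lborel. w t * P t * t)
      \<le> c * (LINT t:{\<tau>..}|lborel. t * w t)
         + \<tau> * ((LINT t|lborel. w t * P t) - c * (LINT t:{\<tau>..}|lborel. w t))"
    using integral_mono[OF int_wPt _ exchange] int_tail_mean int_tail int_wP
    by (simp add: set_lebesgue_integral_def)
  also have "\<dots> \<le> c * (LINT t:{\<tau>..}|lborel. t * w t)"
    using budget \<tau> by (simp add: mult_nonneg_nonpos)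
  finally show ?thesis .
qed

lemma rate_le_tail_mean:
  fixes f P :: "real \<Rightarrow> real"
  assumes nonneg: "\<And>t. 0 \<le> f t" and neg: "\<And>t. t < 0 \<Longrightarrow> f t = 0"
    and int: "integrable lborel f" and mean: "integrable lborel (\<lambda>t. t * f t)"
    and tail: "(LINT t:{\<tau>..}|lborel. f t) = 1/A" and A: "0 < A" and \<tau>: "0 \<le> \<tau>"
    and adm: "admissible f A snr P"
  shows "rate f P \<le> A * snr * (LINT t:{\<tau>..}|lborel. t * f t)"
proof -
  have P_meas: "P \<in> borel_measurable lborel" and P_nonneg: "\<And>t. 0 \<le> P t"
    and P_le: "\<And>t. P t \<le> A * snr" and budget: "(LINT t|lborel. f t * P t) \<le> snr"
    using adm by (auto simp: admissible_def)
  have f_meas: "f \<in> borel_measurable borel"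
    using int by (simp add: borel_measurable_integrable)
  have "rate f P \<le> (LINT t|lborel. f t * P t * t)"
    by (rule rate_le_received_power[OF nonneg neg f_meas mean P_meas P_nonneg P_le])
  also have "\<dots> \<le> A * snr * (LINT t:{\<tau>..}|lborel. t * f t)"
    using budget tail A
    by (intro bathtub_bound[OF nonneg int mean P_meas P_nonneg P_le _ \<tau>]) simp
  finally show ?thesis .
qed

lemma capacity_bounds:
  assumes "admissible f A snr Q" and "\<And>P. admissible f A snr P \<Longrightarrow> rate f P \<le> U"
  shows "rate f Q \<le> capacity f A snr" and "capacity f A snr \<le> U"
proof -
  have "bdd_above (rate f ` {P. admissible f A snr P})"
    by (rule bdd_aboveI[of _ U]) (use assms(2) in auto)
  with assms show "rate f Q \<le> capacity f A snr" "capacity f A snr \<le> U"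
    unfolding capacity_def by (auto intro!: cSup_upper cSup_least)
qed

lemma onoff_rate_eq_rate:
  "onoff_rate f A snr = rate f (\<lambda>t. A * snr * indicator {gain_cdf_inv f (1 - 1/A)..} t)"
  unfolding onoff_rate_def rate_def set_lebesgue_integral_def
  by (rule Bochner_Integration.integral_cong) (auto simp: indicator_def)

lemma admissible_onoff:
  assumes tail: "(LINT t:{\<tau>..}|lborel. f t) = 1/A" and "0 < A" and "0 \<le> snr"
  shows "admissible f A snr (\<lambda>t. A * snr * indicator {\<tau>..} t)"
proof -
  have "(LINT t|lborel. f t * (A * snr * indicator {\<tau>..} t)) = A * snr * (LINT t:{\<tau>..}|lborel. f t)"
    unfolding set_lebesgue_integral_def
    by (simp add: mult_ac flip: integral_mult_right_zero)
  also have "\<dots> = snr" using tail \<open>0 < A\<close> by simp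
  finally show ?thesis
    unfolding admissible_def using assms by (auto simp: indicator_def)
qed

lemma onoff_capacity_bounds:
  fixes f :: "real \<Rightarrow> real" and A snr :: real
  defines "\<tau> \<equiv> gain_cdf_inv f (1 - 1/A)"
  assumes nonneg: "\<And>t. 0 \<le> f t" and neg: "\<And>t. t < 0 \<Longrightarrow> f t = 0"
    and int: "integrable lborel f" and mean: "integrable lborel (\<lambda>t. t * f t)"
    and tail: "(LINT t:{\<tau>..}|lborel. f t) = 1/A" and A: "0 < A" and \<tau>: "0 \<le> \<tau>" and snr: "0 \<le> snr"
  shows "onoff_rate f A snr \<le> capacity f A snr"
    and "capacity f A snr \<le> A * snr * (LINT t:{\<tau>..}|lborel. t * f t)"
  using capacity_bounds[OF admissible_onoff[OF tail A snr] rate_le_tail_mean[OF nonneg neg int mean tail A \<tau>]]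
  by (simp_all add: onoff_rate_eq_rate \<tau>_def)

lemma tendsto_set_integral_ln_div:
  fixes f :: "real \<Rightarrow> real"
  assumes f_meas: "f \<in> borel_measurable borel" and mean: "integrable lborel (\<lambda>t. t * f t)"
    and \<tau>: "0 \<le> \<tau>"
  shows "((\<lambda>a. LINT t:{\<tau>..}|lborel. ln (1 + a * t) / a * f t)
           \<longlongrightarrow> (LINT t:{\<tau>..}|lborel. t * f t)) (at_right 0)"
proof -
  define g where "g a t = indicator {\<tau>..} t * (ln (1 + a * t) / a * f t)" for a t
  have bound: "\<bar>ln (1 + a * t) / a\<bar> \<le> t" if "0 < a" "0 \<le> t" for a t :: real
    using ln_add_one_self_le_self[of "a * t"] that by (simp add: divide_le_eq mult.commute)
  have "((\<lambda>x. LINT t|lborel. g (inverse x) t) \<longlongrightarrow> (LINT t|lborel. indicator {\<tau>..} t * (t * f t))) at_top"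
  proof (rule integral_dominated_convergence_at_top[where w="\<lambda>t. indicator {\<tau>..} t * \<bar>t * f t\<bar>"])
    show "integrable lborel (\<lambda>t. indicator {\<tau>..} t * \<bar>t * f t\<bar>)"
      using integrable_mult_indicator[OF _ integrable_abs[OF mean]] by simp
    show "AE t in lborel. ((\<lambda>x. g (inverse x) t) \<longlongrightarrow> indicator {\<tau>..} t * (t * f t)) at_top"
    proof (rule AE_I2)
      fix t
      show "((\<lambda>x. g (inverse x) t) \<longlongrightarrow> indicator {\<tau>..} t * (t * f t)) at_top"
      proof (cases "\<tau> \<le> t")
        case True
        then have "((\<lambda>a. g a t) \<longlongrightarrow> indicator {\<tau>..} t * (t * f t)) (at_right 0)"
          using tendsto_mult[OF tendsto_ln_add_one_mult_div tendsto_const] by (simp add: g_def)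
        then show ?thesis by (simp add: filterlim_at_top_to_right)
      qed (simp add: g_def)
    qed
    show "\<forall>\<^sub>F x in at_top. AE t in lborel. norm (g (inverse x) t) \<le> indicator {\<tau>..} t * \<bar>t * f t\<bar>"
      using eventually_gt_at_top[of 0]
    proof eventually_elim
      case (elim x)
      have "norm (g (inverse x) t) \<le> indicator {\<tau>..} t * \<bar>t * f t\<bar>" for t
      proof (cases "\<tau> \<le> t")
        case True
        with \<tau> have "\<bar>ln (1 + inverse x * t) / inverse x\<bar> * \<bar>f t\<bar> \<le> \<bar>t\<bar> * \<bar>f t\<bar>"
          using bound[of "inverse x" t] elim by (intro mult_right_mono) auto
        with True show ?thesis by (simp add: g_def abs_mult)
      qed (simp add: g_def)
      then show ?case by (intro AE_I2)
    qed
  qed (use f_meas in \<open>auto simp: g_def\<close>)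
  then show ?thesis
    by (simp add: filterlim_at_top_to_right set_lebesgue_integral_def g_def)
qed

lemma onoff_rate_div_tendsto:
  fixes f :: "real \<Rightarrow> real"
  assumes f_meas: "f \<in> borel_measurable borel" and mean: "integrable lborel (\<lambda>t. t * f t)"
    and A: "0 < A" and \<tau>: "0 \<le> gain_cdf_inv f (1 - 1/A)"
  shows "((\<lambda>snr. onoff_rate f A snr / (A * snr))
           \<longlongrightarrow> (LINT t:{gain_cdf_inv f (1 - 1/A)..}|lborel. t * f t)) (at_right 0)"
proof -
  have "filterlim (\<lambda>snr. A * snr) (at_right 0) (at_right 0)"
  proof (rule filterlim_at_withinI)
    show "((\<lambda>snr. A * snr) \<longlongrightarrow> 0) (at_right 0)"
      by (intro tendsto_mult_right_zero tendsto_ident_at)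
    show "\<forall>\<^sub>F snr in at_right 0. A * snr \<in> {0<..} - {0}"
      using eventually_at_right_less[of 0] by eventually_elim (simp add: A)
  qed
  from filterlim_compose[OF tendsto_set_integral_ln_div[OF f_meas mean \<tau>] this] show ?thesis
    unfolding onoff_rate_def set_lebesgue_integral_def
    by (simp add: mult_ac flip: integral_divide_zero)
qed

theorem corollary1:
  fixes f :: "real \<Rightarrow> real" and A :: real
  assumes A: "A > 1"
    and f_nonneg: "\<And>t. 0 \<le> f t"
    and f_neg: "\<And>t. t < 0 \<Longrightarrow> f t = 0"
    and f_cont: "continuous_on {0..} f"
    and f_int: "integrable lborel f"
    and f_one: "(LINT t|lborel. f t) = 1"
    and f_mean: "integrable lborel (\<lambda>t. t * f t)"
    and F_strict: "strict_mono_on {t. 0 < gain_cdf f t \<and> gain_cdf f t < 1} (gain_cdf f)"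
  shows "((\<lambda>snr. onoff_rate f A snr / capacity f A snr) \<longlongrightarrow> 1) (at_right 0)"
proof -
  define \<tau> where "\<tau> = gain_cdf_inv f (1 - 1/A)"
  define M where "M = (LINT t:{\<tau>..}|lborel. t * f t)"
  have F_\<tau>: "gain_cdf f \<tau> = 1 - 1/A"
    unfolding \<tau>_def using A by (intro gain_cdf_gain_cdf_inv[OF f_nonneg f_int f_one F_strict]) auto
  then have tail: "(LINT t:{\<tau>..}|lborel. f t) = 1/A"
    by (simp add: set_integral_atLeast_gain_cdf[OF f_nonneg f_int f_one])
  have \<tau>_pos: "0 < \<tau>"
    using gain_cdf_pos_imp_pos[OF f_neg] F_\<tau> A by simp
  have "0 < \<tau> * (1/A)"
    using \<tau>_pos A by simp
  also have "\<dots> \<le> M"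
    using set_integral_atLeast_ge_mult[OF f_nonneg f_int f_mean, of \<tau>] tail by (simp add: M_def)
  finally have M_pos: "0 < M" .
  have "((\<lambda>snr. onoff_rate f A snr / (A * snr)) \<longlongrightarrow> M) (at_right 0)"
    unfolding M_def \<tau>_def using f_int f_mean A \<tau>_pos
    by (intro onoff_rate_div_tendsto) (auto simp: borel_measurable_integrable \<tau>_def)
  from tendsto_divide[OF this tendsto_const[of M]] M_pos
  have lim: "((\<lambda>snr. onoff_rate f A snr / (A * snr * M)) \<longlongrightarrow> 1) (at_right 0)"
    by simp
  have "\<forall>\<^sub>F snr in at_right 0.
      0 < onoff_rate f A snr \<and> onoff_rate f A snr \<le> capacity f A snr \<and> capacity f A snr \<le> A * snr * M"
    using eventually_at_right_less[of 0] order_tendstoD(1)[OF lim zero_less_one]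
  proof eventually_elim
    case (elim snr)
    with A M_pos have "0 < A * snr * M" by simp
    with elim have "0 < onoff_rate f A snr" by (simp add: zero_less_divide_iff)
    then show ?case
      using onoff_capacity_bounds[OF f_nonneg f_neg f_int f_mean, of A snr] elim tail A \<tau>_pos
      by (simp flip: \<tau>_def M_def)
  qed
  from tendsto_ratio_sandwich[OF this lim] show ?thesis .
qed

end
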